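(* For all integers $n \geq k \geq 1$, under the natural bi-partition of inputs (Alice holds $x \in \{0,1\}^n$, Bob holds $y \in \{0,1\}^k$), $R(\operatorname{SSD}_{n,k}) = \Omega(\log k)$.
   Context: $\operatorname{SSD}_{n,k} : \{0,1\}^n \times \{0,1\}^k \to \{0,1\}$ is $1$ iff $y$ is a subsequence of $x$ (there exist indices $i_1 < \dots < i_k$ with $x_{i_j} = y_j$). $R(f)$ is the minimum worst-case number of bits exchanged by a randomized two-party protocol computing $f$ with error probability at most $1/3$ on every input. *)

theory Defs
  imports Complex_Main "HOL-Library.Sublist"
begin

text \<open>Deterministic two-party protocol trees: Alice sees the first argument, Bob the second.
  Each internal node is one bit sent by its owner, computed from that player's view.\<close>
datatype ('a, 'b) ptree =
    Out bool
  | ANode "'a \<Rightarrow> bool" "('a, 'b) ptree" "('a, 'b) ptree"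
  | BNode "'b \<Rightarrow> bool" "('a, 'b) ptree" "('a, 'b) ptree"

fun peval :: "('a, 'b) ptree \<Rightarrow> 'a \<Rightarrow> 'b \<Rightarrow> bool" where
  "peval (Out v) x y = v"
| "peval (ANode g l r) x y = (if g x then peval r x y else peval l x y)"
| "peval (BNode g l r) x y = (if g y then peval r x y else peval l x y)"

text \<open>Communication cost = depth of the tree (worst-case number of bits exchanged).\<close>
fun pdepth :: "('a, 'b) ptree \<Rightarrow> nat" where
  "pdepth (Out v) = 0"
| "pdepth (ANode g l r) = Suc (max (pdepth l) (pdepth r))"
| "pdepth (BNode g l r) = Suc (max (pdepth l) (pdepth r))"

text \<open>Private-coin randomized protocol: a deterministic tree where Alice additionally sees her
  private random string ra, drawn uniformly from a finite nonempty set RA, and Bob sees rb drawn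
  uniformly and independently from RB.\<close>
definition computes_rand ::
  "('a \<Rightarrow> 'b \<Rightarrow> bool) \<Rightarrow> 'a set \<Rightarrow> 'b set \<Rightarrow> ('a \<times> nat, 'b \<times> nat) ptree \<Rightarrow> nat set \<Rightarrow> nat set \<Rightarrow> bool"
where
  "computes_rand f A B P RA RB \<longleftrightarrow>
     finite RA \<and> RA \<noteq> {} \<and> finite RB \<and> RB \<noteq> {} \<and>
     (\<forall>x\<in>A. \<forall>y\<in>B.
        3 * card {(ra, rb) \<in> RA \<times> RB. peval P (x, ra) (y, rb) \<noteq> f x y} \<le> card RA * card RB)"

definition Rcc :: "('a \<Rightarrow> 'b \<Rightarrow> bool) \<Rightarrow> 'a set \<Rightarrow> 'b set \<Rightarrow> nat" where
  "Rcc f A B = (LEAST c. \<exists>P RA RB. computes_rand f A B P RA RB \<and> pdepth P \<le> c)"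

definition SSD :: "bool list \<Rightarrow> bool list \<Rightarrow> bool" where
  "SSD x y \<longleftrightarrow> subseq y x"

definition bitstrings :: "nat \<Rightarrow> bool list set" where
  "bitstrings n = {xs. length xs = n}"

end

(*
  The acceptance probability of a private-coin protocol of depth d is a sum, over the at most
  2^(d+1) accepting transcripts p, of products alpha_p(x) * beta_p(y), where alpha_p(x) and
  beta_p(y) are the probabilities that Alice's resp. Bob's coins are consistent with p (the
  coin pairs producing p form a rectangle). Rounding every beta_p(y) to a multiple of 2^-(d+3)
  moves each acceptance probability by at most 1/4, less than the gap 1/3 between inputs in and
  outside SSD. Two distinct y, y' in {0,1}^k are separated by x = y padded with copies of the
  negated last bit of y', so the rounding is injective on {0,1}^k, whence
  2^k <= (2^(d+4))^(2^(d+1)) and d >= (ln k)/7.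
*)
theory Submission
  imports Defs "HOL-Library.FuncSet"
begin

fun transcript :: "('a, 'b) ptree \<Rightarrow> 'a \<Rightarrow> 'b \<Rightarrow> bool list" where
  "transcript (Out v) a b = []"
| "transcript (ANode g l r) a b = g a # transcript (if g a then r else l) a b"
| "transcript (BNode g l r) a b = g b # transcript (if g b then r else l) a b"

fun alice_consistent :: "('a, 'b) ptree \<Rightarrow> 'a \<Rightarrow> bool list \<Rightarrow> bool" where
  "alice_consistent (Out v) a p = (p = [])"
| "alice_consistent (ANode g l r) a [] = False"
| "alice_consistent (ANode g l r) a (c # p) = (g a = c \<and> alice_consistent (if c then r else l) a p)"
| "alice_consistent (BNode g l r) a [] = False"
| "alice_consistent (BNode g l r) a (c # p) = alice_consistent (if c then r else l) a p"

fun bob_consistent :: "('a, 'b) ptree \<Rightarrow> 'b \<Rightarrow> bool list \<Rightarrow> bool" where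
  "bob_consistent (Out v) b p = (p = [])"
| "bob_consistent (ANode g l r) b [] = False"
| "bob_consistent (ANode g l r) b (c # p) = bob_consistent (if c then r else l) b p"
| "bob_consistent (BNode g l r) b [] = False"
| "bob_consistent (BNode g l r) b (c # p) = (g b = c \<and> bob_consistent (if c then r else l) b p)"

fun accepts :: "('a, 'b) ptree \<Rightarrow> bool list \<Rightarrow> bool" where
  "accepts (Out v) p = (v \<and> p = [])"
| "accepts (ANode g l r) [] = False"
| "accepts (ANode g l r) (c # p) = accepts (if c then r else l) p"
| "accepts (BNode g l r) [] = False"
| "accepts (BNode g l r) (c # p) = accepts (if c then r else l) p"

lemma consistent_iff_transcript:
  "alice_consistent P a p \<and> bob_consistent P b p \<longleftrightarrow> p = transcript P a b"
proof (induction P arbitrary: p)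
  case (ANode g l r)
  then show ?case by (cases p) auto
next
  case (BNode g l r)
  then show ?case by (cases p) auto
qed simp

lemma peval_iff_accepts_transcript: "peval P a b \<longleftrightarrow> accepts P (transcript P a b)"
  by (induction P) auto

lemma length_le_pdepth_if_accepts: "accepts P p \<Longrightarrow> length p \<le> pdepth P"
proof (induction P arbitrary: p)
  case (ANode g l r)
  then show ?case by (cases p) (fastforce simp: le_max_iff_disj split: if_splits)+
next
  case (BNode g l r)
  then show ?case by (cases p) (fastforce simp: le_max_iff_disj split: if_splits)+
qed simp

lemma card_lists_length_le_bool: "card {p :: bool list. length p \<le> d} \<le> 2 ^ (d + 1)"
proof -
  have "(\<Sum>i\<le>d. (2::nat) ^ i) \<le> 2 ^ (d + 1)"
    by (induction d) auto
  then show ?thesis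
    using card_lists_length_le[of "UNIV :: bool set" d] by simp
qed

lemma finite_and_card_accepts_le:
  "finite {p. accepts P p} \<and> card {p. accepts P p} \<le> 2 ^ (pdepth P + 1)"
proof -
  have subset: "{p. accepts P p} \<subseteq> {p. length p \<le> pdepth P}"
    using length_le_pdepth_if_accepts by blast
  moreover have finite: "finite {p :: bool list. length p \<le> pdepth P}"
    using finite_lists_length_le[of "UNIV :: bool set" "pdepth P"] by simp
  ultimately have "card {p. accepts P p} \<le> card {p :: bool list. length p \<le> pdepth P}"
    by (rule card_mono[rotated])
  then show ?thesis
    using card_lists_length_le_bool finite subset by (blast intro: order_trans rev_finite_subset)
qed

lemma accepting_coins_eq_UN:
  "{(ra, rb) \<in> RA \<times> RB. peval P (x, ra) (y, rb)} =
    (\<Union>p\<in>{p. accepts P p}.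
       {ra \<in> RA. alice_consistent P (x, ra) p} \<times> {rb \<in> RB. bob_consistent P (y, rb) p})"
  (is "?L = ?R")
proof
  show "?L \<subseteq> ?R"
  proof
    fix z assume "z \<in> ?L"
    then obtain ra rb where z: "z = (ra, rb)" "ra \<in> RA" "rb \<in> RB"
      and "peval P (x, ra) (y, rb)"
      by blast
    moreover define p where "p = transcript P (x, ra) (y, rb)"
    moreover have "alice_consistent P (x, ra) p \<and> bob_consistent P (y, rb) p"
      by (simp add: consistent_iff_transcript p_def)
    ultimately show "z \<in> ?R"
      by (auto simp: peval_iff_accepts_transcript)
  qed
  show "?R \<subseteq> ?L"
  proof
    fix z assume "z \<in> ?R"
    then obtain p ra rb where z: "z = (ra, rb)" "ra \<in> RA" "rb \<in> RB" and "accepts P p"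
      and consistent: "alice_consistent P (x, ra) p" "bob_consistent P (y, rb) p"
      by blast
    moreover from consistent have "p = transcript P (x, ra) (y, rb)"
      by (rule consistent_iff_transcript[THEN iffD1, OF conjI])
    ultimately show "z \<in> ?L"
      by (simp add: peval_iff_accepts_transcript)
  qed
qed

definition accept_prob ::
  "('a \<times> 'r, 'b \<times> 's) ptree \<Rightarrow> 'r set \<Rightarrow> 's set \<Rightarrow> 'a \<Rightarrow> 'b \<Rightarrow> real" where
  "accept_prob P RA RB x y =
     card {(ra, rb) \<in> RA \<times> RB. peval P (x, ra) (y, rb)} / (card RA * card RB)"

definition alice_weight :: "('a \<times> 'r, 'b) ptree \<Rightarrow> 'r set \<Rightarrow> 'a \<Rightarrow> bool list \<Rightarrow> real" where
  "alice_weight P RA x p = card {ra \<in> RA. alice_consistent P (x, ra) p} / card RA"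

definition bob_weight :: "('a, 'b \<times> 's) ptree \<Rightarrow> 's set \<Rightarrow> 'b \<Rightarrow> bool list \<Rightarrow> real" where
  "bob_weight P RB y p = card {rb \<in> RB. bob_consistent P (y, rb) p} / card RB"

lemma card_filter_div_card_bounds:
  "0 \<le> real (card {z \<in> R. Q z}) / card R \<and> real (card {z \<in> R. Q z}) / card R \<le> 1"
proof (cases "finite R")
  case True
  then have "card {z \<in> R. Q z} \<le> card R"
    by (intro card_mono) auto
  then show ?thesis
    by (cases "card R = 0") auto
qed simp

lemma alice_weight_bounds: "0 \<le> alice_weight P RA x p \<and> alice_weight P RA x p \<le> 1"
  unfolding alice_weight_def by (rule card_filter_div_card_bounds)

lemma bob_weight_bounds: "0 \<le> bob_weight P RB y p \<and> bob_weight P RB y p \<le> 1"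
  unfolding bob_weight_def by (rule card_filter_div_card_bounds)

lemma accept_prob_eq_sum:
  assumes "finite RA" "finite RB"
  shows "accept_prob P RA RB x y =
    (\<Sum>p | accepts P p. alice_weight P RA x p * bob_weight P RB y p)"
proof -
  have "card {(ra, rb) \<in> RA \<times> RB. peval P (x, ra) (y, rb)} =
    (\<Sum>p | accepts P p.
       card {ra \<in> RA. alice_consistent P (x, ra) p} * card {rb \<in> RB. bob_consistent P (y, rb) p})"
    unfolding accepting_coins_eq_UN
  proof (subst card_UN_disjoint)
    show "\<forall>p\<in>{p. accepts P p}. \<forall>q\<in>{p. accepts P p}. p \<noteq> q \<longrightarrow>
      ({ra \<in> RA. alice_consistent P (x, ra) p} \<times> {rb \<in> RB. bob_consistent P (y, rb) p}) \<inter>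
      ({ra \<in> RA. alice_consistent P (x, ra) q} \<times> {rb \<in> RB. bob_consistent P (y, rb) q}) = {}"
      by (fastforce dest: consistent_iff_transcript[THEN iffD1, OF conjI])
  qed (use assms finite_and_card_accepts_le in \<open>auto simp: card_cartesian_product\<close>)
  then show ?thesis
    unfolding accept_prob_def alice_weight_def bob_weight_def
    by (simp add: sum_divide_distrib)
qed

lemma card_coins_peval_ne:
  assumes "finite RA" "finite RB"
  shows "card {(ra, rb) \<in> RA \<times> RB. peval P (x, ra) (y, rb) \<noteq> v} =
    (if v then card RA * card RB - card {(ra, rb) \<in> RA \<times> RB. peval P (x, ra) (y, rb)}
     else card {(ra, rb) \<in> RA \<times> RB. peval P (x, ra) (y, rb)})"
proof (cases v)
  case True
  let ?acc = "{(ra, rb) \<in> RA \<times> RB. peval P (x, ra) (y, rb)}"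
  have "?acc \<subseteq> RA \<times> RB" and "finite ?acc"
    using assms by (auto intro: rev_finite_subset)
  from True have "card {(ra, rb) \<in> RA \<times> RB. peval P (x, ra) (y, rb) \<noteq> v} =
      card (RA \<times> RB - ?acc)"
    by (intro arg_cong[where f = card]) auto
  also have "\<dots> = card RA * card RB - card ?acc"
    using card_Diff_subset[OF \<open>finite ?acc\<close> \<open>?acc \<subseteq> RA \<times> RB\<close>]
    by (simp only: card_cartesian_product)
  finally show ?thesis
    using True by simp
qed simp

lemma accept_prob_error:
  assumes "computes_rand f A B P RA RB" "x \<in> A" "y \<in> B"
  shows "\<bar>accept_prob P RA RB x y - of_bool (f x y)\<bar> \<le> 1 / 3"
proof -
  let ?acc = "{(ra, rb) \<in> RA \<times> RB. peval P (x, ra) (y, rb)}"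
  let ?N = "card RA * card RB"
  from assms have fin: "finite RA" "finite RB" and "RA \<noteq> {}" "RB \<noteq> {}"
    and err: "3 * card {(ra, rb) \<in> RA \<times> RB. peval P (x, ra) (y, rb) \<noteq> f x y} \<le> ?N"
    unfolding computes_rand_def by auto
  then have N: "0 < ?N"
    by (simp add: card_gt_0_iff)
  have acc_le: "card ?acc \<le> ?N"
    using card_mono[of "RA \<times> RB" ?acc] fin by (auto simp: card_cartesian_product)
  then have "real (card ?acc) \<le> real ?N"
    by (simp only: of_nat_le_iff)
  moreover have "3 * (if f x y then real ?N - card ?acc else card ?acc) \<le> real ?N"
  proof -
    from err have "real (3 * card {(ra, rb) \<in> RA \<times> RB. peval P (x, ra) (y, rb) \<noteq> f x y}) \<le> real ?N"
      by (simp only: of_nat_le_iff)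
    then show ?thesis
      unfolding card_coins_peval_ne[OF fin] using acc_le
      by (cases "f x y") (simp_all add: of_nat_diff)
  qed
  ultimately show ?thesis
    using N unfolding accept_prob_def
    by (cases "f x y") (auto simp: field_simps abs_le_iff)
qed

lemma accept_prob_gap:
  assumes "computes_rand f A B P RA RB" "x \<in> A" "y \<in> B" "y' \<in> B" "f x y \<noteq> f x y'"
  shows "1 / 3 \<le> \<bar>accept_prob P RA RB x y - accept_prob P RA RB x y'\<bar>"
  using accept_prob_error[OF assms(1-3)] accept_prob_error[OF assms(1,2,4)] assms(5)
  by (cases "f x y") (auto simp: abs_if split: if_split_asm)

lemma accept_prob_close:
  assumes "finite RA" "finite RB"
    and close: "\<And>p. accepts P p \<Longrightarrow>
      \<bar>bob_weight P RB y p - bob_weight P RB y' p\<bar> \<le> \<epsilon>"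
  shows "\<bar>accept_prob P RA RB x y - accept_prob P RA RB x y'\<bar> \<le>
    real (card {p. accepts P p}) * \<epsilon>"
proof -
  have "\<bar>accept_prob P RA RB x y - accept_prob P RA RB x y'\<bar> =
    \<bar>\<Sum>p | accepts P p.
       alice_weight P RA x p * (bob_weight P RB y p - bob_weight P RB y' p)\<bar>"
    by (simp add: accept_prob_eq_sum assms(1,2) sum_subtractf right_diff_distrib)
  also have "\<dots> \<le> (\<Sum>p | accepts P p.
       \<bar>alice_weight P RA x p * (bob_weight P RB y p - bob_weight P RB y' p)\<bar>)"
    by (rule sum_abs)
  also have "\<dots> \<le> (\<Sum>p | accepts P p. \<epsilon>)"
  proof (rule sum_mono)
    fix p assume "p \<in> {p. accepts P p}"
    then have "\<bar>bob_weight P RB y p - bob_weight P RB y' p\<bar> \<le> \<epsilon>"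
      by (simp add: close)
    moreover have "\<bar>alice_weight P RA x p\<bar> \<le> 1"
      using alice_weight_bounds[of P RA x p] by simp
    ultimately show "\<bar>alice_weight P RA x p * (bob_weight P RB y p - bob_weight P RB y' p)\<bar> \<le> \<epsilon>"
      unfolding abs_mult by (meson abs_ge_zero mult_left_le_one_le order_trans)
  qed
  finally show ?thesis
    by simp
qed

lemma computes_rand_Out:
  assumes "computes_rand f A B (Out v) RA RB" "x \<in> A" "y \<in> B"
  shows "f x y = v"
proof -
  from assms(1) have "finite RA" "RA \<noteq> {}" "finite RB" "RB \<noteq> {}"
    unfolding computes_rand_def by auto
  then have "accept_prob (Out v) RA RB x y = of_bool v"
    by (auto simp: accept_prob_def card_cartesian_product)
  then show ?thesis
    using accept_prob_error[OF assms] by (cases v; cases "f x y") auto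
qed

lemma pdepth_pos_if_computes_rand_nonconstant:
  assumes "computes_rand f A B P RA RB" "x \<in> A" "x' \<in> A" "y \<in> B" "y' \<in> B"
    and "f x y \<noteq> f x' y'"
  shows "0 < pdepth P"
proof (rule ccontr)
  assume "\<not> 0 < pdepth P"
  then obtain v where "P = Out v"
    by (cases P) auto
  then show False
    using computes_rand_Out assms by metis
qed

definition distinct_columns :: "('a \<Rightarrow> 'b \<Rightarrow> bool) \<Rightarrow> 'a set \<Rightarrow> 'b set \<Rightarrow> bool" where
  "distinct_columns f A B \<longleftrightarrow> (\<forall>y\<in>B. \<forall>y'\<in>B. y \<noteq> y' \<longrightarrow> (\<exists>x\<in>A. f x y \<noteq> f x y'))"

lemma abs_diff_lt_one_if_floor_eq: "\<lfloor>a :: real\<rfloor> = \<lfloor>b\<rfloor> \<Longrightarrow> \<bar>a - b\<bar> < 1"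
  by (smt (verit) of_int_floor_le real_of_int_floor_add_one_gt)

definition rounded_bob_weights ::
  "('a \<times> 'r, 'b \<times> 's) ptree \<Rightarrow> 's set \<Rightarrow> 'b \<Rightarrow> bool list \<Rightarrow> int"
where
  "rounded_bob_weights P RB y = (\<lambda>p\<in>{p. accepts P p}. \<lfloor>bob_weight P RB y p * 2 ^ (pdepth P + 3)\<rfloor>)"

lemma rounded_bob_weights_in_PiE:
  "rounded_bob_weights P RB y \<in> {p. accepts P p} \<rightarrow>\<^sub>E {0..2 ^ (pdepth P + 3)}"
proof -
  have "\<lfloor>bob_weight P RB y p * 2 ^ (pdepth P + 3)\<rfloor> \<in> {0..2 ^ (pdepth P + 3)}" for p
  proof -
    have "0 \<le> bob_weight P RB y p * 2 ^ (pdepth P + 3)"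
      using bob_weight_bounds[of P RB y p] by simp
    moreover have "bob_weight P RB y p * 2 ^ (pdepth P + 3) \<le> 2 ^ (pdepth P + 3)"
      using bob_weight_bounds[of P RB y p] by (intro mult_left_le_one_le) auto
    then have "\<lfloor>bob_weight P RB y p * 2 ^ (pdepth P + 3)\<rfloor> \<le> \<lfloor>(2::real) ^ (pdepth P + 3)\<rfloor>"
      by (rule floor_mono)
    ultimately show ?thesis
      by simp
  qed
  then show ?thesis
    unfolding rounded_bob_weights_def by (simp add: restrict_PiE_iff)
qed

lemma bob_weights_close_if_rounded_eq:
  assumes "rounded_bob_weights P RB y = rounded_bob_weights P RB y'" "accepts P p"
  shows "\<bar>bob_weight P RB y p - bob_weight P RB y' p\<bar> \<le> 1 / 2 ^ (pdepth P + 3)"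
proof -
  have "\<bar>bob_weight P RB y p * 2 ^ (pdepth P + 3) - bob_weight P RB y' p * 2 ^ (pdepth P + 3)\<bar> < 1"
    using fun_cong[OF assms(1), of p] assms(2)
    by (intro abs_diff_lt_one_if_floor_eq) (simp add: rounded_bob_weights_def)
  then have "\<bar>bob_weight P RB y p - bob_weight P RB y' p\<bar> * 2 ^ (pdepth P + 3) < 1"
    by (simp add: abs_mult flip: left_diff_distrib)
  then show ?thesis
    by (simp add: less_divide_eq less_imp_le)
qed

lemma inj_on_rounded_bob_weights:
  assumes computes: "computes_rand f A B P RA RB" and distinct: "distinct_columns f A B"
  shows "inj_on (rounded_bob_weights P RB) B"
proof (rule inj_onI, rule ccontr)
  fix y y' assume "y \<in> B" "y' \<in> B" "y \<noteq> y'"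
    and rounded_eq: "rounded_bob_weights P RB y = rounded_bob_weights P RB y'"
  then obtain x where x: "x \<in> A" "f x y \<noteq> f x y'"
    using distinct unfolding distinct_columns_def by blast
  have fin: "finite RA" "finite RB"
    using computes unfolding computes_rand_def by auto
  have "\<bar>accept_prob P RA RB x y - accept_prob P RA RB x y'\<bar> \<le>
      card {p. accepts P p} * (1 / 2 ^ (pdepth P + 3))"
    using bob_weights_close_if_rounded_eq[OF rounded_eq] by (rule accept_prob_close[OF fin])
  also have "\<dots> \<le> 1 / 4"
  proof -
    have "card {p. accepts P p} \<le> 2 ^ (pdepth P + 1)"
      using finite_and_card_accepts_le by blast
    then have "real (card {p. accepts P p}) \<le> 2 ^ (pdepth P + 1)"
      by (metis of_nat_le_iff of_nat_numeral of_nat_power)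
    then show ?thesis
      by (simp add: field_simps power_add)
  qed
  finally show False
    using accept_prob_gap[OF computes x(1) \<open>y \<in> B\<close> \<open>y' \<in> B\<close> x(2)] by linarith
qed

lemma card_le_if_distinct_columns:
  assumes "computes_rand f A B P RA RB" "distinct_columns f A B"
  shows "card B \<le> 2 ^ ((pdepth P + 4) * 2 ^ (pdepth P + 1))"
proof -
  define d where "d = pdepth P"
  define T where "T = {p. accepts P p}"
  have "finite T" and card_T: "card T \<le> 2 ^ (d + 1)"
    using finite_and_card_accepts_le[of P] by (simp_all add: T_def d_def)
  have "rounded_bob_weights P RB ` B \<subseteq> T \<rightarrow>\<^sub>E {0..2 ^ (d + 3)}"
    unfolding T_def d_def by (rule image_subsetI, rule rounded_bob_weights_in_PiE)
  then have "card B \<le> card (T \<rightarrow>\<^sub>E {0..2 ^ (d + 3) :: int})"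
    using inj_on_rounded_bob_weights[OF assms] \<open>finite T\<close>
    by (intro card_inj_on_le) (auto simp: finite_PiE)
  also have "\<dots> = (2 ^ (d + 3) + 1) ^ card T"
    using \<open>finite T\<close> by (simp add: card_PiE nat_add_distrib nat_power_eq)
  also have "\<dots> \<le> (2 ^ (d + 4)) ^ card T"
    by (rule power_mono) (simp_all add: power_add)
  also have "\<dots> \<le> (2 ^ (d + 4)) ^ 2 ^ (d + 1)"
    by (rule power_increasing[OF card_T]) simp
  also have "\<dots> = 2 ^ ((d + 4) * 2 ^ (d + 1))"
    by (rule power_mult[symmetric])
  finally show ?thesis
    unfolding d_def .
qed

text \<open>An embedding of \<open>y'\<close> either stays inside \<open>y\<close>, which has the same length, or sends the last
  letter of \<open>y'\<close> into the padding, which consists of its negation.\<close>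
lemma not_subseq_append_replicate_not_last:
  assumes "length y' = length y" "y' \<noteq> y"
  shows "\<not> subseq y' (y @ replicate m (\<not> last y'))"
proof
  assume "subseq y' (y @ replicate m (\<not> last y'))"
  then obtain ys zs where split: "y' = ys @ zs" "subseq ys y" "subseq zs (replicate m (\<not> last y'))"
    by (auto elim: subseq_appendE)
  show False
  proof (cases "zs = []")
    case True
    then show False
      using split assms subseq_same_length by auto
  next
    case False
    then have "last zs = (\<not> last y')"
      using list_emb_set[OF split(3), of "last zs"] by auto
    moreover have "last y' = last zs"
      using split(1) False by simp
    ultimately show False
      by simp
  qed
qed

lemma distinct_columns_SSD:
  assumes "k \<le> n"
  shows "distinct_columns SSD (bitstrings n) (bitstrings k)"
  unfolding distinct_columns_def
proof (intro ballI impI)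
  fix y y' assume "y \<in> bitstrings k" "y' \<in> bitstrings k" "y \<noteq> y'"
  then have lengths: "length y = k" "length y' = k"
    by (auto simp: bitstrings_def)
  define x where "x = y @ replicate (n - k) (\<not> last y')"
  have "x \<in> bitstrings n"
    using assms lengths by (simp add: x_def bitstrings_def)
  moreover have "SSD x y"
    unfolding SSD_def x_def by (rule subseq_rev_drop_many) simp
  moreover have "\<not> SSD x y'"
    using not_subseq_append_replicate_not_last lengths \<open>y \<noteq> y'\<close> by (simp add: SSD_def x_def)
  ultimately show "\<exists>x\<in>bitstrings n. SSD x y \<noteq> SSD x y'"
    by blast
qed

fun bob_sends ::
  "('a \<Rightarrow> bool list \<Rightarrow> bool) \<Rightarrow> nat \<Rightarrow> bool list \<Rightarrow> ('a \<times> 'r, bool list \<times> 's) ptree"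
where
  "bob_sends f 0 sent = ANode (\<lambda>(x, _). f x sent) (Out False) (Out True)"
| "bob_sends f (Suc m) sent =
     BNode (\<lambda>(y, _). y ! length sent)
       (bob_sends f m (sent @ [False])) (bob_sends f m (sent @ [True]))"

lemma peval_bob_sends:
  "length y = length sent + m \<Longrightarrow> take (length sent) y = sent \<Longrightarrow>
    peval (bob_sends f m sent) (x, ra) (y, rb) = f x y"
proof (induction m arbitrary: sent)
  case 0
  then show ?case
    by simp
next
  case (Suc m)
  then have "take (length (sent @ [y ! length sent])) y = sent @ [y ! length sent]"
    by (simp add: take_Suc_conv_app_nth)
  with Suc show ?case
    by (cases "y ! length sent") auto
qed

lemma computes_rand_bob_sends: "computes_rand f A (bitstrings k) (bob_sends f k []) {0} {0}"
  by (simp add: computes_rand_def bitstrings_def peval_bob_sends)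

lemma Rcc_attained:
  assumes "computes_rand f A B P RA RB"
  obtains P' RA' RB' where "computes_rand f A B P' RA' RB'" "pdepth P' = Rcc f A B"
proof -
  let ?Q = "\<lambda>c. \<exists>P RA RB. computes_rand f A B P RA RB \<and> pdepth P \<le> c"
  have "?Q (Rcc f A B)"
    unfolding Rcc_def by (rule LeastI[of ?Q "pdepth P"]) (use assms in blast)
  then obtain P' RA' RB' where "computes_rand f A B P' RA' RB'" "pdepth P' \<le> Rcc f A B"
    by blast
  moreover from this(1) have "Rcc f A B \<le> pdepth P'"
    unfolding Rcc_def by (blast intro: Least_le)
  ultimately show thesis
    using that by simp
qed

lemma card_bitstrings: "card (bitstrings k) = 2 ^ k"
  using card_lists_length_eq[of "UNIV :: bool set" k] by (simp add: bitstrings_def)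

lemma ln_le_of_pow_le_double_exponential:
  assumes "(2::nat) ^ k \<le> 2 ^ ((d + 4) * 2 ^ (d + 1))" "1 \<le> d" "1 \<le> k"
  shows "ln (real k) \<le> 7 * real d"
proof -
  have "k \<le> (d + 4) * 2 ^ (d + 1)"
    using assms(1) by simp
  also have "\<dots> \<le> 2 ^ (d + 4) * 2 ^ (d + 1)"
    using less_exp[of "d + 4"] by simp
  also have "\<dots> = 2 ^ (2 * d + 5)"
    unfolding power_add[symmetric] by simp
  also have "\<dots> \<le> 2 ^ (7 * d)"
    using assms(2) by (intro power_increasing) auto
  finally have "real k \<le> 2 ^ (7 * d)"
    by (metis of_nat_le_iff of_nat_numeral of_nat_power)
  then have "ln (real k) \<le> real (7 * d) * ln 2"
    using assms(3) by (simp add: ln_realpow[symmetric] del: of_nat_mult)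
  also have "\<dots> \<le> 7 * real d"
    using ln_2_less_1 by (simp add: mult_left_le)
  finally show ?thesis .
qed

theorem mainTheorem7:
  shows "\<exists>c>0. \<forall>n k::nat. 1 \<le> k \<and> k \<le> n \<longrightarrow>
           real (Rcc SSD (bitstrings n) (bitstrings k)) \<ge> c * ln (real k)"
proof (intro exI[of _ "1 / 7"] conjI allI impI)
  fix n k :: nat assume nk: "1 \<le> k \<and> k \<le> n"
  then have distinct: "distinct_columns SSD (bitstrings n) (bitstrings k)"
    by (intro distinct_columns_SSD) simp
  obtain P RA RB where computes: "computes_rand SSD (bitstrings n) (bitstrings k) P RA RB"
    and depth: "pdepth P = Rcc SSD (bitstrings n) (bitstrings k)"
    using Rcc_attained[OF computes_rand_bob_sends] by blast
  have columns: "replicate k True \<in> bitstrings k" "replicate k False \<in> bitstrings k"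
    "replicate k True \<noteq> replicate k False"
    using nk by (auto simp: bitstrings_def neq0_conv[symmetric])
  then obtain x where x: "x \<in> bitstrings n" "SSD x (replicate k True) \<noteq> SSD x (replicate k False)"
    using distinct unfolding distinct_columns_def by blast
  have "1 \<le> pdepth P"
    using pdepth_pos_if_computes_rand_nonconstant[OF computes x(1) x(1) columns(1,2) x(2)] by simp
  moreover have "2 ^ k \<le> (2::nat) ^ ((pdepth P + 4) * 2 ^ (pdepth P + 1))"
    using card_le_if_distinct_columns[OF computes distinct] by (simp add: card_bitstrings)
  ultimately have "ln (real k) \<le> 7 * real (pdepth P)"
    using nk by (intro ln_le_of_pow_le_double_exponential) auto
  then show "real (Rcc SSD (bitstrings n) (bitstrings k)) \<ge> 1 / 7 * ln (real k)"
    using depth by simp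
qed simp

end
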